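(* Let $Q$ be the unique positive radial solution in $H^1(\mathbb{R}^2)$ of $-\Delta u+u-u^3=0$ and $a^*=\|Q\|_2^2$. Suppose positive constants $b_1,b_2,\beta$ satisfy $0<b_1<b_2<a^*$ and $b_2\le2\beta+b_1$. Define $$l(t)=\frac{t^2+t}{\frac{b_2}{2}t^2+\beta t+\frac{b_1}{2}},\quad t\in[0,\infty).$$ Then $l(t)>l(1)=\frac{2}{\frac{b_2}{2}+\beta+\frac{b_1}{2}}$ for all $t\in(1,\infty)$. *)

theory Defs
  imports "HOL-Analysis.Analysis"
begin

definition d2x :: "(real \<times> real \<Rightarrow> real) \<Rightarrow> real \<times> real \<Rightarrow> real" where
  "d2x u p = deriv (\<lambda>s. deriv (\<lambda>r. u (r, snd p)) s) (fst p)"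

definition d2y :: "(real \<times> real \<Rightarrow> real) \<Rightarrow> real \<times> real \<Rightarrow> real" where
  "d2y u p = deriv (\<lambda>s. deriv (\<lambda>r. u (fst p, r)) s) (snd p)"

definition dx :: "(real \<times> real \<Rightarrow> real) \<Rightarrow> real \<times> real \<Rightarrow> real" where
  "dx u p = deriv (\<lambda>r. u (r, snd p)) (fst p)"

definition dy :: "(real \<times> real \<Rightarrow> real) \<Rightarrow> real \<times> real \<Rightarrow> real" where
  "dy u p = deriv (\<lambda>r. u (fst p, r)) (snd p)"

definition pos_radial_solution :: "(real \<times> real \<Rightarrow> real) \<Rightarrow> bool" where
  "pos_radial_solution u \<longleftrightarrow>
     (\<forall>p. u p > 0) \<and>
     (\<forall>p q. norm p = norm q \<longrightarrow> u p = u q) \<and>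
     (\<forall>x y. (\<lambda>r. u (r, y)) differentiable at x \<and> (\<lambda>r. u (x, r)) differentiable at y \<and>
            (\<lambda>s. deriv (\<lambda>r. u (r, y)) s) differentiable at x \<and>
            (\<lambda>s. deriv (\<lambda>r. u (x, r)) s) differentiable at y) \<and>
     (\<forall>p. - (d2x u p + d2y u p) + u p - u p ^ 3 = 0) \<and>
     u \<in> borel_measurable lborel \<and>
     integrable lborel (\<lambda>p. (u p)\<^sup>2) \<and>
     integrable lborel (\<lambda>p. (dx u p)\<^sup>2) \<and>
     integrable lborel (\<lambda>p. (dy u p)\<^sup>2)"

definition Q :: "real \<times> real \<Rightarrow> real" where
  "Q = (THE u. pos_radial_solution u)"

definition a_star :: real where
  "a_star = (LINT p|lborel. (Q p)\<^sup>2)"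

definition l_fun :: "real \<Rightarrow> real \<Rightarrow> real \<Rightarrow> real \<Rightarrow> real" where
  "l_fun b1 b2 \<beta> t = (t\<^sup>2 + t) / (b2 / 2 * t\<^sup>2 + \<beta> * t + b1 / 2)"

end

theory Submission
  imports Defs
begin

text \<open>Cross-multiplying by the positive denominators, l t > l 1 is the positivity of
  (t - 1) ((2\<beta> + b1 - b2) t + 2 b1); for t > 1 both factors are positive since
  b2 \<le> 2\<beta> + b1 and b1 > 0.\<close>

lemma l_fun_cross_difference:
  fixes b1 b2 \<beta> t :: real
  shows "(t\<^sup>2 + t) * (b2 / 2 + \<beta> + b1 / 2) - 2 * (b2 / 2 * t\<^sup>2 + \<beta> * t + b1 / 2)
         = (t - 1) * ((2 * \<beta> + b1 - b2) * t + 2 * b1) / 2"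
  by (simp add: power2_eq_square field_simps)

lemma l_fun_one:
  fixes b1 b2 \<beta> :: real
  shows "l_fun b1 b2 \<beta> 1 = 2 / (b2 / 2 + \<beta> + b1 / 2)"
  by (simp add: l_fun_def)

lemma l_fun_gt_one:
  fixes b1 b2 \<beta> t :: real
  assumes "0 < b1" "0 \<le> b2" "0 \<le> \<beta>" "b2 \<le> 2 * \<beta> + b1" "1 < t"
  shows "l_fun b1 b2 \<beta> 1 < l_fun b1 b2 \<beta> t"
proof -
  have denom_t: "0 < b2 / 2 * t\<^sup>2 + \<beta> * t + b1 / 2"
    using assms by (intro add_nonneg_pos) auto
  have denom_1: "0 < b2 / 2 + \<beta> + b1 / 2"
    using assms by simp
  have "0 < (t - 1) * ((2 * \<beta> + b1 - b2) * t + 2 * b1) / 2"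
    using assms by (intro divide_pos_pos mult_pos_pos add_nonneg_pos) auto
  then have "2 * (b2 / 2 * t\<^sup>2 + \<beta> * t + b1 / 2) < (t\<^sup>2 + t) * (b2 / 2 + \<beta> + b1 / 2)"
    unfolding l_fun_cross_difference [symmetric] by simp
  then show ?thesis
    using denom_t denom_1 by (simp add: l_fun_one l_fun_def divide_simps) (simp add: algebra_simps)
qed

theorem lemmaA1:
  fixes b1 b2 \<beta> :: real
  assumes "0 < b1" "b1 < b2" "b2 < a_star" "0 < \<beta>" "b2 \<le> 2 * \<beta> + b1"
  shows "l_fun b1 b2 \<beta> 1 = 2 / (b2 / 2 + \<beta> + b1 / 2)
         \<and> (\<forall>t > 1. l_fun b1 b2 \<beta> t > l_fun b1 b2 \<beta> 1)"
  using assms l_fun_one l_fun_gt_one by auto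

end
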